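(* For every formula $A$ of $\mathbf{L_1}$: $\vdash_{\mathbf{HL_1}}A$ if and only if $\dashv_H A$ (i.e. $A$ is a theorem of $\mathbf{HAR}$).
   Context: Formulas of $\mathbf{L_1}$: built from atomic formulas $\epsilon ab$ ($a,b$ name variables, possibly equal) with primitive connectives $\vee,\sim$; $\wedge,\supset,\equiv$ defined as usual. Disjunctions may be associated in any way. $\vdash_H A$: $A$ belongs to the smallest set containing all instances of classical propositional tautologies and all formulas $\epsilon ab\supset\epsilon aa$, $(\epsilon ab\wedge\epsilon bc)\supset\epsilon ac$, $(\epsilon ab\wedge\epsilon bb)\supset\epsilon ba$, closed under modus ponens. Positive/negative parts (occurrences): $A$ is a positive part of $A$; if $B\vee C$ is a positive part then $B,C$ are positive parts; if $\sim B$ is a positive part then $B$ is a negative part; if $\sim B$ is a negative part then $B$ is a positive part. $F[B_+,B_-]$ denotes a formula in which some $B$ has one occurrence as positive part and another non-overlapping occurrence as negative part. Hintikka formula: a formula $H$ such that (1) $H$ is not of the form $F[B_+,B_-]$; (2) if $B\vee C$ is a negative part of $H$ then $B$ or $C$ is; (3) if $\epsilon ab$ is a negative part then so is $\epsilon aa$; (4) if $\epsilon ab,\epsilon bc$ are negative parts then so is $\epsilon ac$; (5) if $\epsilon ab,\epsilon bb$ are negative parts then so is $\epsilon ba$. $\mathbf{HAR}$: fix a name variable $a_0$; $\dashv_H$ is the smallest set such that $\dashv_H\epsilon a_0a_0$; $\dashv_H\sim\epsilon a_0a_0$; if $\vdash_H A\supset B$ and $\dashv_H B$ then $\dashv_H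 A$; if $\dashv_H A$ and $A$ is obtained from $B$ by uniform substitution of name variables for name variables then $\dashv_H B$; if $A$ is a Hintikka formula that is a disjunction of atomic or negated atomic formulas, $\dashv_H A$, and $\epsilon ab$ is not a negative part of $A$, then $\dashv_H A\vee\epsilon ab$. $\mathbf{HL_1}$: $\vdash_{\mathbf{HL_1}}$ is the smallest set of formulas containing every Hintikka formula and such that $\vdash_H A\supset B$ and $\vdash_{\mathbf{HL_1}}B$ imply $\vdash_{\mathbf{HL_1}}A$. *)

theory Defs
  imports Main
begin

type_synonym name = nat

datatype fm = Eps name name | Or fm fm | Neg fm

definition And :: "fm \<Rightarrow> fm \<Rightarrow> fm" where
  "And A B = Neg (Or (Neg A) (Neg B))"
definition Imp :: "fm \<Rightarrow> fm \<Rightarrow> fm" where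
  "Imp A B = Or (Neg A) B"
definition Iff :: "fm \<Rightarrow> fm \<Rightarrow> fm" where
  "Iff A B = And (Imp A B) (Imp B A)"

datatype pform = PVar nat | POr pform pform | PNeg pform

fun peval :: "(nat \<Rightarrow> bool) \<Rightarrow> pform \<Rightarrow> bool" where
  "peval v (PVar n) = v n"
| "peval v (POr p q) = (peval v p \<or> peval v q)"
| "peval v (PNeg p) = (\<not> peval v p)"

definition ptaut :: "pform \<Rightarrow> bool" where
  "ptaut p \<longleftrightarrow> (\<forall>v. peval v p)"

fun pinst :: "(nat \<Rightarrow> fm) \<Rightarrow> pform \<Rightarrow> fm" where
  "pinst \<sigma> (PVar n) = \<sigma> n"
| "pinst \<sigma> (POr p q) = Or (pinst \<sigma> p) (pinst \<sigma> q)"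
| "pinst \<sigma> (PNeg p) = Neg (pinst \<sigma> p)"

definition taut_instance :: "fm \<Rightarrow> bool" where
  "taut_instance A \<longleftrightarrow> (\<exists>p \<sigma>. ptaut p \<and> pinst \<sigma> p = A)"

inductive provH :: "fm \<Rightarrow> bool" where
  taut: "taut_instance A \<Longrightarrow> provH A"
| ax1: "provH (Imp (Eps a b) (Eps a a))"
| ax2: "provH (Imp (And (Eps a b) (Eps b c)) (Eps a c))"
| ax3: "provH (Imp (And (Eps a b) (Eps b b)) (Eps b a))"
| mp: "provH (Imp A B) \<Longrightarrow> provH A \<Longrightarrow> provH B"

text \<open>Positive / negative parts, as occurrences identified by positions (paths).
  Position p@[0] is the left (or only) immediate subformula, p@[1] the right one.\<close>
inductive pos_part :: "fm \<Rightarrow> nat list \<Rightarrow> fm \<Rightarrow> bool"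
  and neg_part :: "fm \<Rightarrow> nat list \<Rightarrow> fm \<Rightarrow> bool" for A :: fm where
  pos_self: "pos_part A [] A"
| pos_orL: "pos_part A p (Or B C) \<Longrightarrow> pos_part A (p @ [0]) B"
| pos_orR: "pos_part A p (Or B C) \<Longrightarrow> pos_part A (p @ [1]) C"
| pos_neg: "pos_part A p (Neg B) \<Longrightarrow> neg_part A (p @ [0]) B"
| neg_neg: "neg_part A p (Neg B) \<Longrightarrow> pos_part A (p @ [0]) B"

definition is_neg_part :: "fm \<Rightarrow> fm \<Rightarrow> bool" where
  "is_neg_part A B \<longleftrightarrow> (\<exists>p. neg_part A p B)"

text \<open>A is of the form F[B+,B-]: some B has a positive occurrence and a non-overlapping
  negative occurrence (occurrences overlap iff one position is a prefix of the other).\<close>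
definition has_pos_neg :: "fm \<Rightarrow> bool" where
  "has_pos_neg A \<longleftrightarrow> (\<exists>B p q. pos_part A p B \<and> neg_part A q B
      \<and> \<not> (\<exists>r. q = p @ r) \<and> \<not> (\<exists>r. p = q @ r))"

definition hintikka :: "fm \<Rightarrow> bool" where
  "hintikka H \<longleftrightarrow>
     \<not> has_pos_neg H
   \<and> (\<forall>B C. is_neg_part H (Or B C) \<longrightarrow> is_neg_part H B \<or> is_neg_part H C)
   \<and> (\<forall>a b. is_neg_part H (Eps a b) \<longrightarrow> is_neg_part H (Eps a a))
   \<and> (\<forall>a b c. is_neg_part H (Eps a b) \<and> is_neg_part H (Eps b c) \<longrightarrow> is_neg_part H (Eps a c))
   \<and> (\<forall>a b. is_neg_part H (Eps a b) \<and> is_neg_part H (Eps b b) \<longrightarrow> is_neg_part H (Eps b a))"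

inductive lit_disj :: "fm \<Rightarrow> bool" where
  "lit_disj (Eps a b)"
| "lit_disj (Neg (Eps a b))"
| "lit_disj A \<Longrightarrow> lit_disj B \<Longrightarrow> lit_disj (Or A B)"

fun nsubst :: "(name \<Rightarrow> name) \<Rightarrow> fm \<Rightarrow> fm" where
  "nsubst s (Eps a b) = Eps (s a) (s b)"
| "nsubst s (Or A B) = Or (nsubst s A) (nsubst s B)"
| "nsubst s (Neg A) = Neg (nsubst s A)"

inductive refH :: "name \<Rightarrow> fm \<Rightarrow> bool" for a0 :: name where
  r_atom: "refH a0 (Eps a0 a0)"
| r_negatom: "refH a0 (Neg (Eps a0 a0))"
| r_mp: "provH (Imp A B) \<Longrightarrow> refH a0 B \<Longrightarrow> refH a0 A"
| r_subst: "refH a0 A \<Longrightarrow> A = nsubst s B \<Longrightarrow> refH a0 B"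
| r_ext: "hintikka A \<Longrightarrow> lit_disj A \<Longrightarrow> refH a0 A \<Longrightarrow> \<not> is_neg_part A (Eps a b)
           \<Longrightarrow> refH a0 (Or A (Eps a b))"

inductive provHL1 :: "fm \<Rightarrow> bool" where
  hl_hint: "hintikka A \<Longrightarrow> provHL1 A"
| hl_mp: "provH (Imp A B) \<Longrightarrow> provHL1 B \<Longrightarrow> provHL1 A"

end

theory Submission
  imports Defs "HOL-Library.Nat_Bijection"
begin

text \<open>Both HL1 and HAR derive exactly the formulas that are not theorems of H.
  On the one hand, H is sound for Lesniewski's reading of \<open>\<epsilon>ab\<close> in a set model (the name a
  denotes exactly one object, and that object falls under b), and every Hintikka formula
  is false in such a model, built from the equivalence classes of its negative atomic
  parts; both systems only step from a formula B to a formula A with \<open>\<turnstile>\<^sub>H A \<supset> B\<close>, which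
  preserves falsifiability.
  On the other hand, a non-theorem A of H has a countermodel satisfying the axioms for the
  finitely many names of A; its diagram, the disjunction of \<open>\<sim>\<epsilon>ab\<close> for the true atoms and
  \<open>\<epsilon>ab\<close> for the false ones, is a Hintikka formula implied by A, and it is refutable in HAR:
  substituting a0 for every name turns its negative part into a formula implying
  \<open>\<sim>\<epsilon>a0a0\<close>, and the atoms are then added one at a time by the last rule of HAR.\<close>

section \<open>Valuations and the propositional part of H\<close>

fun holds :: "(name \<Rightarrow> name \<Rightarrow> bool) \<Rightarrow> fm \<Rightarrow> bool" where
  "holds w (Eps a b) = w a b"
| "holds w (Or A B) = (holds w A \<or> holds w B)"
| "holds w (Neg A) = (\<not> holds w A)"

lemma holds_And [simp]: "holds w (And A B) \<longleftrightarrow> holds w A \<and> holds w B"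
  by (simp add: And_def)

lemma holds_Imp [simp]: "holds w (Imp A B) \<longleftrightarrow> (holds w A \<longrightarrow> holds w B)"
  by (simp add: Imp_def)

lemma holds_pinst: "holds w (pinst \<sigma> p) = peval (\<lambda>n. holds w (\<sigma> n)) p"
  by (induct p) auto

lemma holds_nsubst: "holds w (nsubst s A) = holds (\<lambda>a b. w (s a) (s b)) A"
  by (induct A) auto

fun names :: "fm \<Rightarrow> name list" where
  "names (Eps a b) = [a, b]"
| "names (Or A B) = names A @ names B"
| "names (Neg A) = names A"

lemma holds_cong:
  "(\<And>a b. a \<in> set (names A) \<Longrightarrow> b \<in> set (names A) \<Longrightarrow> w a b = w' a b) \<Longrightarrow> holds w A = holds w' A"
  by (induct A) auto

text \<open>Atoms become propositional variables through the pairing bijection.\<close>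

fun skeleton :: "fm \<Rightarrow> pform" where
  "skeleton (Eps a b) = PVar (prod_encode (a, b))"
| "skeleton (Or A B) = POr (skeleton A) (skeleton B)"
| "skeleton (Neg A) = PNeg (skeleton A)"

lemma pinst_skeleton: "pinst (\<lambda>n. case prod_decode n of (a, b) \<Rightarrow> Eps a b) (skeleton A) = A"
  by (induct A) simp_all

lemma peval_skeleton: "peval v (skeleton A) = holds (\<lambda>a b. v (prod_encode (a, b))) A"
  by (induct A) simp_all

lemma provH_if_valid:
  assumes "\<And>w. holds w A"
  shows "provH A"
proof (rule provH.taut)
  show "taut_instance A"
    unfolding taut_instance_def ptaut_def using pinst_skeleton peval_skeleton assms by metis
qed

lemma holds_foldr_Imp: "holds w (foldr Imp Gs A) \<longleftrightarrow> ((\<forall>G\<in>set Gs. holds w G) \<longrightarrow> holds w A)"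
  by (induct Gs) auto

lemma provH_foldr_Imp: "provH (foldr Imp Gs A) \<Longrightarrow> \<forall>G\<in>set Gs. provH G \<Longrightarrow> provH A"
  by (induct Gs arbitrary: A) (auto intro: provH.mp)

lemma provH_if_consequence:
  assumes "\<forall>G\<in>set Gs. provH G" and "\<And>w. \<forall>G\<in>set Gs. holds w G \<Longrightarrow> holds w A"
  shows "provH A"
  using provH_foldr_Imp[OF provH_if_valid assms(1)] assms(2) by (simp add: holds_foldr_Imp)

section \<open>Set models\<close>

definition eps_ont :: "(name \<Rightarrow> 'o set) \<Rightarrow> name \<Rightarrow> name \<Rightarrow> bool" where
  "eps_ont D a b \<longleftrightarrow> (\<exists>x. D a = {x} \<and> x \<in> D b)"

lemma provH_sound: "provH A \<Longrightarrow> holds (eps_ont D) A"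
proof (induct rule: provH.induct)
  case (taut A)
  then obtain p \<sigma> where "ptaut p" "pinst \<sigma> p = A"
    unfolding taut_instance_def by blast
  then show ?case using holds_pinst unfolding ptaut_def by metis
qed (auto simp: eps_ont_def)

definition eps_closed :: "(name \<Rightarrow> name \<Rightarrow> bool) \<Rightarrow> bool" where
  "eps_closed S \<longleftrightarrow> (\<forall>a b. S a b \<longrightarrow> S a a) \<and> (\<forall>a b c. S a b \<and> S b c \<longrightarrow> S a c)
     \<and> (\<forall>a b. S a b \<and> S b b \<longrightarrow> S b a)"

definition eps_class :: "(name \<Rightarrow> name \<Rightarrow> bool) \<Rightarrow> name \<Rightarrow> name set" where
  "eps_class S a = {x. S x a \<and> S a x}"

text \<open>The objects of the canonical model are the classes of the names a with \<open>S a a\<close>; a name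
  b with \<open>\<not> S b b\<close> additionally denotes two further objects, so that it is not singular.\<close>

definition canonical_denot :: "(name \<Rightarrow> name \<Rightarrow> bool) \<Rightarrow> name \<Rightarrow> (name set + bool) set" where
  "canonical_denot S b =
     {Inl (eps_class S c) | c. S c b} \<union> (if S b b then {} else {Inr True, Inr False})"

lemma eps_class_eq:
  assumes "eps_closed S" "S c a" "S a a"
  shows "eps_class S c = eps_class S a"
  unfolding eps_class_def
proof (rule Collect_cong)
  have "S a c"
    using assms unfolding eps_closed_def by blast
  then show "S x c \<and> S c x \<longleftrightarrow> S x a \<and> S a x" for x
    using assms unfolding eps_closed_def by blast
qed

lemma canonical_denot_singular:
  assumes "eps_closed S" "S a a"
  shows "canonical_denot S a = {Inl (eps_class S a)}"
proof -
  have "{Inl (eps_class S c) | c. S c a} = {Inl (eps_class S a)}"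
    using assms eps_class_eq[OF assms(1) _ assms(2)] by blast
  with assms(2) show ?thesis
    by (simp add: canonical_denot_def)
qed

lemma eps_ont_canonical_denot:
  assumes "eps_closed S"
  shows "eps_ont (canonical_denot S) = S"
proof (intro ext)
  fix a b
  show "eps_ont (canonical_denot S) a b = S a b"
  proof (cases "S a a")
    case True
    have "Inl (eps_class S a) \<in> canonical_denot S b \<longleftrightarrow> S a b"
    proof
      assume "Inl (eps_class S a) \<in> canonical_denot S b"
      then obtain c where "eps_class S a = eps_class S c" "S c b"
        unfolding canonical_denot_def by (auto split: if_splits)
      moreover have "a \<in> eps_class S a"
        using True by (simp add: eps_class_def)
      ultimately have "S a c" "S c b"
        by (auto simp: eps_class_def)
      then show "S a b"
        using assms unfolding eps_closed_def by blast
    qed (auto simp: canonical_denot_def)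
    then show ?thesis
      using canonical_denot_singular[OF assms True] by (simp add: eps_ont_def)
  next
    case False
    then have "{Inr True, Inr False} \<subseteq> canonical_denot S a"
      by (simp add: canonical_denot_def)
    then have "\<not> eps_ont (canonical_denot S) a b"
      unfolding eps_ont_def by auto
    with False show ?thesis
      using assms unfolding eps_closed_def by blast
  qed
qed

fun step :: "fm \<times> bool \<Rightarrow> nat \<Rightarrow> (fm \<times> bool) option" where
  "step (Or B C, b) i = (if i = 0 then Some (B, b) else if i = 1 then Some (C, b) else None)"
| "step (Neg B, b) i = (if i = 0 then Some (B, \<not> b) else None)"
| "step (Eps x y, b) i = None"

text \<open>The subformula at a position together with its polarity (\<open>True\<close> for positive).\<close>

definition subformula_at :: "fm \<Rightarrow> nat list \<Rightarrow> (fm \<times> bool) option" where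
  "subformula_at A p = fold (\<lambda>i acc. Option.bind acc (\<lambda>x. step x i)) p (Some (A, True))"

lemma subformula_at_Nil: "subformula_at A [] = Some (A, True)"
  by (simp add: subformula_at_def)

lemma subformula_at_snoc: "subformula_at A (p @ [i]) = Option.bind (subformula_at A p) (\<lambda>x. step x i)"
  by (simp add: subformula_at_def)

lemma subformula_at_parts:
  "pos_part A p B \<Longrightarrow> subformula_at A p = Some (B, True)"
  "neg_part A p B \<Longrightarrow> subformula_at A p = Some (B, False)"
  by (induct rule: pos_part_neg_part.inducts) (simp_all add: subformula_at_snoc subformula_at_Nil)

lemma step_size_less: "step (F, b) i = Some (G, c) \<Longrightarrow> size G < size F"
  by (cases F) (auto split: if_splits)

lemma subformula_at_append_size_less:
  "subformula_at A p = Some (B, b) \<Longrightarrow> subformula_at A (p @ r) = Some (B', b') \<Longrightarrow> r \<noteq> []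
    \<Longrightarrow> size B' < size B"
proof (induct r arbitrary: B' b' rule: rev_induct)
  case (snoc i r)
  obtain G c where G: "subformula_at A (p @ r) = Some (G, c)" "step (G, c) i = Some (B', b')"
    using snoc.prems(2) subformula_at_snoc[of A "p @ r" i] by (cases "subformula_at A (p @ r)") auto
  have "size B' < size G"
    using step_size_less[OF G(2)] .
  moreover have "size G \<le> size B"
    using snoc.hyps[OF snoc.prems(1) G(1)] snoc.prems(1) G(1) by (cases "r = []") auto
  ultimately show ?case by simp
qed simp

lemma pos_neg_part_incomparable:
  assumes "pos_part A p B" "neg_part A q B"
  shows "\<nexists>r. q = p @ r" and "\<nexists>r. p = q @ r"
  using subformula_at_parts(1)[OF assms(1)] subformula_at_parts(2)[OF assms(2)]
    subformula_at_append_size_less[of A p B True _ B False]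
    subformula_at_append_size_less[of A q B False _ B True]
  by force+

section \<open>Hintikka formulas are falsifiable\<close>

definition neg_atoms :: "fm \<Rightarrow> name \<Rightarrow> name \<Rightarrow> bool" where
  "neg_atoms H a b \<longleftrightarrow> is_neg_part H (Eps a b)"

lemma hintikka_eps_closed: "hintikka H \<Longrightarrow> eps_closed (neg_atoms H)"
  unfolding hintikka_def eps_closed_def neg_atoms_def by blast

lemma hintikka_pos_atom_not_neg_atom:
  assumes "hintikka H" "pos_part H p (Eps a b)"
  shows "\<not> neg_atoms H a b"
proof
  assume "neg_atoms H a b"
  then obtain q where q: "neg_part H q (Eps a b)"
    by (auto simp: neg_atoms_def is_neg_part_def)
  have "\<not> has_pos_neg H"
    using assms(1) unfolding hintikka_def by blast
  then show False
    using pos_neg_part_incomparable[OF assms(2) q] assms(2) q unfolding has_pos_neg_def by blast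
qed

lemma hintikka_parts_polarity:
  assumes "hintikka H"
  shows "(\<forall>p. pos_part H p B \<longrightarrow> \<not> holds (neg_atoms H) B) \<and> (\<forall>p. neg_part H p B \<longrightarrow> holds (neg_atoms H) B)"
proof (induct B)
  case (Eps a b)
  then show ?case
    using hintikka_pos_atom_not_neg_atom[OF assms] by (auto simp: neg_atoms_def is_neg_part_def)
next
  case (Or B C)
  have "\<not> holds (neg_atoms H) (Or B C)" if "pos_part H p (Or B C)" for p
    using Or that pos_part_neg_part.pos_orL[OF that] pos_part_neg_part.pos_orR[OF that] by auto
  moreover have "holds (neg_atoms H) (Or B C)" if "neg_part H p (Or B C)" for p
  proof -
    have "is_neg_part H B \<or> is_neg_part H C"
      using assms that unfolding hintikka_def is_neg_part_def by blast
    then show ?thesis using Or unfolding is_neg_part_def by auto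
  qed
  ultimately show ?case by blast
next
  case (Neg B)
  then show ?case by (auto intro: pos_part_neg_part.intros)
qed

lemma hintikka_not_holds: "hintikka H \<Longrightarrow> \<not> holds (neg_atoms H) H"
  using hintikka_parts_polarity pos_part_neg_part.pos_self by blast

definition ont_falsifiable :: "fm \<Rightarrow> bool" where
  "ont_falsifiable A \<longleftrightarrow> (\<exists>D :: name \<Rightarrow> (name set + bool) set. \<not> holds (eps_ont D) A)"

lemma ont_falsifiable_not_provH: "ont_falsifiable A \<Longrightarrow> \<not> provH A"
  using provH_sound unfolding ont_falsifiable_def by blast

lemma ont_falsifiable_provH_Imp: "provH (Imp A B) \<Longrightarrow> ont_falsifiable B \<Longrightarrow> ont_falsifiable A"
  using provH_sound[of "Imp A B"] unfolding ont_falsifiable_def by force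

lemma eps_ont_hintikka: "hintikka H \<Longrightarrow> eps_ont (canonical_denot (neg_atoms H)) = neg_atoms H"
  by (rule eps_ont_canonical_denot[OF hintikka_eps_closed])

lemma provHL1_ont_falsifiable: "provHL1 A \<Longrightarrow> ont_falsifiable A"
proof (induct rule: provHL1.induct)
  case (hl_hint A)
  then show ?case
    using hintikka_not_holds eps_ont_hintikka unfolding ont_falsifiable_def by metis
qed (rule ont_falsifiable_provH_Imp)

lemma refH_ont_falsifiable: "refH a0 A \<Longrightarrow> ont_falsifiable A"
proof (induct rule: refH.induct)
  case r_atom
  have "\<not> holds (eps_ont (\<lambda>_. {})) (Eps a0 a0)"
    by (simp add: eps_ont_def)
  then show ?case unfolding ont_falsifiable_def by blast
next
  case r_negatom
  have "\<not> holds (eps_ont (\<lambda>_. {Inl {}})) (Neg (Eps a0 a0))"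
    by (simp add: eps_ont_def)
  then show ?case unfolding ont_falsifiable_def by blast
next
  case (r_mp A B)
  then show ?case using ont_falsifiable_provH_Imp by blast
next
  case (r_subst A s B)
  then obtain D :: "name \<Rightarrow> (name set + bool) set" where "\<not> holds (eps_ont D) (nsubst s B)"
    unfolding ont_falsifiable_def by blast
  moreover have "eps_ont (D \<circ> s) = (\<lambda>a b. eps_ont D (s a) (s b))"
    by (simp add: eps_ont_def fun_eq_iff)
  ultimately have "\<not> holds (eps_ont (D \<circ> s)) B"
    by (simp add: holds_nsubst)
  then show ?case unfolding ont_falsifiable_def by blast
next
  case (r_ext A a b)
  then have "\<not> holds (eps_ont (canonical_denot (neg_atoms A))) (Or A (Eps a b))"
    using hintikka_not_holds eps_ont_hintikka by (simp add: neg_atoms_def)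
  then show ?case unfolding ont_falsifiable_def by blast
qed

fun lits :: "fm \<Rightarrow> fm set" where
  "lits (Or A B) = lits A \<union> lits B"
| "lits (Eps a b) = {Eps a b}"
| "lits (Neg A) = {Neg A}"

lemma holds_iff_lits: "holds w A \<longleftrightarrow> (\<exists>l\<in>lits A. holds w l)"
  by (induct A) auto

lemma lits_foldl_Or: "lits (foldl Or A xs) = lits A \<union> (\<Union>x\<in>set xs. lits x)"
  by (induct xs arbitrary: A) auto

lemma lit_disj_foldl_Or: "lit_disj A \<Longrightarrow> \<forall>x\<in>set xs. lit_disj x \<Longrightarrow> lit_disj (foldl Or A xs)"
  by (induct xs arbitrary: A) (auto intro: lit_disj.intros)

lemma pos_orR_Suc_0: "pos_part A p (Or B C) \<Longrightarrow> pos_part A (p @ [Suc 0]) C"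
  using pos_part_neg_part.pos_orR by simp

lemma parts_Or_cases:
  "pos_part (Or A B) p F \<Longrightarrow>
     (p = [] \<and> F = Or A B) \<or> (\<exists>q. p = 0 # q \<and> pos_part A q F) \<or> (\<exists>q. p = 1 # q \<and> pos_part B q F)"
  "neg_part (Or A B) p F \<Longrightarrow> (\<exists>q. p = 0 # q \<and> neg_part A q F) \<or> (\<exists>q. p = 1 # q \<and> neg_part B q F)"
  by (induct rule: pos_part_neg_part.inducts) (auto intro: pos_part_neg_part.intros pos_orR_Suc_0)

lemma parts_Neg_Eps:
  "pos_part (Neg (Eps a b)) p F \<Longrightarrow> p = [] \<and> F = Neg (Eps a b)"
  "neg_part (Neg (Eps a b)) p F \<Longrightarrow> p = [0] \<and> F = Eps a b"
  by (induct rule: pos_part_neg_part.inducts) auto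

lemma parts_Eps:
  "pos_part (Eps a b) p F \<Longrightarrow> p = [] \<and> F = Eps a b"
  "neg_part (Eps a b) p F \<Longrightarrow> False"
  by (induct rule: pos_part_neg_part.inducts) auto

lemma parts_Or_shift:
  "pos_part A q F \<Longrightarrow> pos_part (Or A B) (0 # q) F \<and> pos_part (Or B A) (1 # q) F"
  "neg_part A q F \<Longrightarrow> neg_part (Or A B) (0 # q) F \<and> neg_part (Or B A) (1 # q) F"
proof (induct rule: pos_part_neg_part.inducts)
  case pos_self
  have "pos_part (Or A B) ([] @ [0]) A" "pos_part (Or B A) ([] @ [1]) A"
    by (rule pos_part_neg_part.intros pos_part_neg_part.pos_self)+
  then show ?case by simp
qed (metis append_Cons pos_part_neg_part.intros)+

lemma lit_disj_neg_part:
  "lit_disj X \<Longrightarrow> neg_part X p F \<Longrightarrow> \<exists>a b. F = Eps a b \<and> Neg (Eps a b) \<in> lits X"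
proof (induct X arbitrary: p rule: lit_disj.induct)
  case (2 a b) then show ?case using parts_Neg_Eps(2) by fastforce
next
  case (3 A B) then show ?case using parts_Or_cases(2) by fastforce
qed (use parts_Eps in blast)

lemma lit_disj_pos_atom: "lit_disj X \<Longrightarrow> pos_part X p (Eps a b) \<Longrightarrow> Eps a b \<in> lits X"
proof (induct X arbitrary: p rule: lit_disj.induct)
  case (2 a b) then show ?case using parts_Neg_Eps(1) by fastforce
next
  case (3 A B) then show ?case using parts_Or_cases(1)[of A B p "Eps a b"] by auto
qed (use parts_Eps in auto)

lemma lit_disj_neg_atom: "lit_disj X \<Longrightarrow> Neg (Eps a b) \<in> lits X \<Longrightarrow> neg_atoms X a b"
proof (induct X rule: lit_disj.induct)
  case (2 c d)
  have "neg_part (Neg (Eps c d)) ([] @ [0]) (Eps c d)"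
    by (rule pos_part_neg_part.pos_neg pos_part_neg_part.pos_self)+
  then show ?case using 2 by (auto simp: neg_atoms_def is_neg_part_def)
next
  case (3 A B)
  then show ?case using parts_Or_shift(2) unfolding neg_atoms_def is_neg_part_def by auto blast+
qed simp

lemma lit_disj_neg_atoms_iff: "lit_disj X \<Longrightarrow> neg_atoms X a b \<longleftrightarrow> Neg (Eps a b) \<in> lits X"
  using lit_disj_neg_part[of X _ "Eps a b"] lit_disj_neg_atom
  unfolding neg_atoms_def is_neg_part_def by blast

definition hintikka_clause :: "fm \<Rightarrow> bool" where
  "hintikka_clause X \<longleftrightarrow> lit_disj X \<and> eps_closed (neg_atoms X)
     \<and> (\<forall>a b. neg_atoms X a b \<longrightarrow> Eps a b \<notin> lits X)"

lemma hintikka_clause_hintikka: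
  assumes "hintikka_clause X"
  shows "hintikka X"
proof -
  have ld: "lit_disj X" and cl: "eps_closed (neg_atoms X)"
    and cons: "\<forall>a b. neg_atoms X a b \<longrightarrow> Eps a b \<notin> lits X"
    using assms unfolding hintikka_clause_def by auto
  have "\<not> has_pos_neg X"
  proof
    assume "has_pos_neg X"
    then obtain B p q where pq: "pos_part X p B" "neg_part X q B"
      unfolding has_pos_neg_def by blast
    then obtain a b where "B = Eps a b" "neg_atoms X a b"
      using lit_disj_neg_part[OF ld] lit_disj_neg_atoms_iff[OF ld] by blast
    with pq cons show False
      using lit_disj_pos_atom[OF ld] by blast
  qed
  moreover have "\<not> is_neg_part X (Or B C)" for B C
    using lit_disj_neg_part[OF ld] unfolding is_neg_part_def by blast
  ultimately show ?thesis
    using cl unfolding hintikka_def eps_closed_def neg_atoms_def by blast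
qed

section \<open>Refutations in HAR\<close>

lemma refH_foldl_Or_neg_atoms:
  assumes neg: "\<forall>l\<in>set (n # ns). \<exists>a b. l = Neg (Eps a b)"
  shows "refH a0 (foldl Or n ns)"
proof -
  have "provH (Imp (nsubst (\<lambda>_. a0) (foldl Or n ns)) (Neg (Eps a0 a0)))"
  proof (rule provH_if_valid)
    fix w
    have "\<not> holds (\<lambda>_ _. w a0 a0) l" if "l \<in> set (n # ns)" "w a0 a0" for l
      using neg that by auto
    moreover have "lits l = {l}" if "l \<in> set (n # ns)" for l
      using neg that by auto
    ultimately show "holds w (Imp (nsubst (\<lambda>_. a0) (foldl Or n ns)) (Neg (Eps a0 a0)))"
      using holds_iff_lits[of _ "foldl Or n ns"] by (auto simp: holds_nsubst lits_foldl_Or)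
  qed
  then have "refH a0 (nsubst (\<lambda>_. a0) (foldl Or n ns))"
    using refH.r_negatom by (rule refH.r_mp)
  then show ?thesis
    by (rule refH.r_subst) simp
qed

lemma refH_foldl_Or_atoms:
  assumes "refH a0 X" "hintikka_clause X" "\<forall>x\<in>set xs. \<exists>a b. x = Eps a b \<and> \<not> neg_atoms X a b"
  shows "refH a0 (foldl Or X xs) \<and> hintikka_clause (foldl Or X xs) \<and> lits (foldl Or X xs) = lits X \<union> set xs"
  using assms
proof (induct xs arbitrary: X)
  case (Cons x xs)
  then obtain a b where x: "x = Eps a b" and new: "\<not> neg_atoms X a b" by auto
  have ld: "lit_disj X"
    using Cons.prems(2) unfolding hintikka_clause_def by blast
  have ldx: "lit_disj (Or X (Eps a b))"
    using ld by (auto intro: lit_disj.intros)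
  have "refH a0 (Or X (Eps a b))"
    using refH.r_ext[OF hintikka_clause_hintikka[OF Cons.prems(2)] ld Cons.prems(1)] new
    by (simp add: neg_atoms_def)
  moreover have neg: "neg_atoms (Or X (Eps a b)) = neg_atoms X"
    by (auto simp: fun_eq_iff lit_disj_neg_atoms_iff[OF ld] lit_disj_neg_atoms_iff[OF ldx])
  moreover have "hintikka_clause (Or X (Eps a b))"
    using Cons.prems(2) new ldx unfolding hintikka_clause_def neg by auto
  ultimately show ?case
    using Cons.hyps[of "Or X (Eps a b)"] Cons.prems(3) x by auto
qed simp

section \<open>Completeness\<close>

lemma unprovable_closed_countermodel:
  assumes "\<not> provH A"
  obtains S where "eps_closed S" "\<not> holds S A"
    "\<And>a b. S a b \<Longrightarrow> a \<in> set (names A) \<and> b \<in> set (names A)"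
proof -
  let ?N = "names A"
  define Gs where "Gs = [Imp (Eps a b) (Eps a a). a \<leftarrow> ?N, b \<leftarrow> ?N]
     @ [Imp (And (Eps a b) (Eps b c)) (Eps a c). a \<leftarrow> ?N, b \<leftarrow> ?N, c \<leftarrow> ?N]
     @ [Imp (And (Eps a b) (Eps b b)) (Eps b a). a \<leftarrow> ?N, b \<leftarrow> ?N]"
  have "\<forall>G\<in>set Gs. provH G"
    unfolding Gs_def by (auto intro: provH.intros)
  then obtain w where wG: "\<forall>G\<in>set Gs. holds w G" and wA: "\<not> holds w A"
    using provH_if_consequence assms by blast
  define S where "S a b \<longleftrightarrow> a \<in> set ?N \<and> b \<in> set ?N \<and> w a b" for a b
  have ax1: "Imp (Eps a b) (Eps a a) \<in> set Gs" if "a \<in> set ?N" "b \<in> set ?N" for a b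
    using that unfolding Gs_def by auto
  have ax2: "Imp (And (Eps a b) (Eps b c)) (Eps a c) \<in> set Gs"
    if "a \<in> set ?N" "b \<in> set ?N" "c \<in> set ?N" for a b c
    using that unfolding Gs_def by auto
  have ax3: "Imp (And (Eps a b) (Eps b b)) (Eps b a) \<in> set Gs" if "a \<in> set ?N" "b \<in> set ?N" for a b
    using that unfolding Gs_def by auto
  have "w a a" if "a \<in> set ?N" "b \<in> set ?N" "w a b" for a b
    using bspec[OF wG ax1[OF that(1,2)]] that(3) by simp
  moreover have "w a c" if "a \<in> set ?N" "b \<in> set ?N" "c \<in> set ?N" "w a b" "w b c" for a b c
    using bspec[OF wG ax2[OF that(1-3)]] that(4,5) by simp
  moreover have "w b a" if "a \<in> set ?N" "b \<in> set ?N" "w a b" "w b b" for a b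
    using bspec[OF wG ax3[OF that(1,2)]] that(3,4) by simp
  ultimately have "eps_closed S"
    unfolding eps_closed_def S_def by blast
  moreover have "\<not> holds S A"
    using wA holds_cong[of A S w] by (simp add: S_def)
  ultimately show thesis
    by (rule that) (simp add: S_def)
qed

lemma refutable_clause_of_eps_closed:
  assumes closed: "eps_closed S" and supp: "\<And>a b. S a b \<Longrightarrow> a \<in> set ns \<and> b \<in> set ns"
  obtains X where "refH a0 X" "hintikka_clause X" "neg_atoms X = S"
proof (cases "\<exists>a b. S a b")
  case False
  then have "S = (\<lambda>_ _. False)"
    by auto
  moreover have "neg_atoms (Eps a0 a0) = (\<lambda>_ _. False)"
    by (auto simp: fun_eq_iff lit_disj_neg_atoms_iff lit_disj.intros)
  ultimately show thesis
    by (intro that[of "Eps a0 a0"] refH.r_atom) (auto simp: hintikka_clause_def eps_closed_def lit_disj.intros)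
next
  case True
  define negs where "negs = [Neg (Eps a b). a \<leftarrow> ns, b \<leftarrow> ns, S a b]"
  have negs_iff: "l \<in> set negs \<longleftrightarrow> (\<exists>a b. l = Neg (Eps a b) \<and> S a b)" for l
    unfolding negs_def using supp by auto
  obtain n ns' where negs: "negs = n # ns'"
    using True negs_iff by (cases negs) auto
  define X where "X = foldl Or n ns'"
  have lit: "lit_disj l \<and> lits l = {l}" if "l \<in> set negs" for l
    using that negs_iff[of l] by (auto intro: lit_disj.intros)
  have ld: "lit_disj X" and lX: "lits X = set negs"
    using lit lit_disj_foldl_Or negs unfolding X_def by (auto simp: lits_foldl_Or)
  have "neg_atoms X = S"
    using negs_iff by (auto simp: fun_eq_iff lit_disj_neg_atoms_iff[OF ld] lX)
  moreover have "refH a0 X"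
    using negs negs_iff unfolding X_def by (intro refH_foldl_Or_neg_atoms) (metis set_ConsD)
  moreover have "hintikka_clause X"
    using ld lX closed negs_iff calculation(1) by (auto simp: hintikka_clause_def)
  ultimately show thesis
    using that by blast
qed

lemma refutable_diagram:
  assumes closed: "eps_closed S" and supp: "\<And>a b. S a b \<Longrightarrow> a \<in> set ns \<and> b \<in> set ns"
  obtains H where "hintikka H" "refH a0 H"
    "\<And>w a b. \<not> holds w H \<Longrightarrow> a \<in> set ns \<Longrightarrow> b \<in> set ns \<Longrightarrow> w a b = S a b"
proof -
  obtain X where X: "refH a0 X" "hintikka_clause X" "neg_atoms X = S"
    using refutable_clause_of_eps_closed[OF closed supp] by blast
  define poss where "poss = [Eps a b. a \<leftarrow> ns, b \<leftarrow> ns, \<not> S a b]"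
  define H where "H = foldl Or X poss"
  have "refH a0 H" "hintikka_clause H" and lH: "lits H = lits X \<union> set poss"
    using refH_foldl_Or_atoms[OF X(1,2), of poss] X(3) unfolding H_def poss_def by auto
  moreover have "w a b = S a b" if "\<not> holds w H" "a \<in> set ns" "b \<in> set ns" for w a b
  proof -
    have false: "\<not> holds w l" if "l \<in> lits H" for l
      using \<open>\<not> holds w H\<close> holds_iff_lits[of w H] that by blast
    show ?thesis
    proof (cases "S a b")
      case True
      then have "Neg (Eps a b) \<in> lits H"
        using X(2,3) lit_disj_neg_atoms_iff lH unfolding hintikka_clause_def by blast
      with True show ?thesis
        using false by fastforce
    next
      case False
      then have "Eps a b \<in> lits H"
        using that(2,3) lH unfolding poss_def by auto
      with False show ?thesis
        using false by fastforce
    qed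
  qed
  ultimately show thesis
    using that hintikka_clause_hintikka by blast
qed

lemma unprovable_hintikka_consequence:
  assumes "\<not> provH A"
  obtains H where "hintikka H" "refH a0 H" "provH (Imp A H)"
proof -
  obtain S where S: "eps_closed S" "\<not> holds S A"
    and supp: "\<And>a b. S a b \<Longrightarrow> a \<in> set (names A) \<and> b \<in> set (names A)"
    using unprovable_closed_countermodel assms by blast
  obtain H where H: "hintikka H" "refH a0 H"
    and agree: "\<And>w a b. \<not> holds w H \<Longrightarrow> a \<in> set (names A) \<Longrightarrow> b \<in> set (names A) \<Longrightarrow> w a b = S a b"
    using refutable_diagram[OF S(1) supp] by blast
  have "provH (Imp A H)"
  proof (rule provH_if_valid)
    fix w
    show "holds w (Imp A H)"
    proof (cases "holds w H")
      case False
      then have "holds w A = holds S A"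
        using agree by (intro holds_cong) blast
      with S(2) show ?thesis by simp
    qed simp
  qed
  with H show thesis by (rule that)
qed

theorem theorem9p3:
  fixes a0 :: name and A :: fm
  shows "provHL1 A \<longleftrightarrow> refH a0 A"
proof
  assume "provHL1 A"
  then have "\<not> provH A"
    by (intro ont_falsifiable_not_provH provHL1_ont_falsifiable)
  then obtain H where "refH a0 H" "provH (Imp A H)"
    by (rule unprovable_hintikka_consequence)
  then show "refH a0 A"
    using refH.r_mp by blast
next
  assume "refH a0 A"
  then have "\<not> provH A"
    by (intro ont_falsifiable_not_provH refH_ont_falsifiable)
  then obtain H where "hintikka H" "provH (Imp A H)"
    by (rule unprovable_hintikka_consequence)
  then show "provHL1 A"
    using provHL1.hl_mp provHL1.hl_hint by blast
qed

end
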